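(* Suppose $1/n\ll\varepsilon\ll1$ and let $k$ be an integer with $n/4\leq k\leq 3n/4$. Let $C$ be an oriented cycle on $n$ vertices with $\sigma(C)<\varepsilon n$. Then the vertices of $C$ can be labelled $C=(u_1u_2\dots u_n)$ (a choice of cyclic order and starting vertex) such that: (i) there are long runs $P_1,P_2$ in $C$ such that $P_1$ is a forward path and $d_C(P_1,P_2)=k$; (ii) there are long runs $P_1',P_2',P_3',P_4'$ in $C$ such that $d_C(P_i',P_{i+1}')=\lfloor n/4\rfloor$ for $i=1,2,3$.
   Context: For an oriented cycle $C$, a sink vertex is a vertex of outdegree $0$ in $C$, and $\sigma(C)$ is the number of sink vertices. Given the labelling $C=(u_1\dots u_n)$ (indices mod $n$), subpaths are traversed in increasing index order, giving each an initial and a final vertex; an edge between $u_i$ and $u_{i+1}$ is forward if it is $u_iu_{i+1}$ and backward if it is $u_{i+1}u_i$; a subpath is a forward path if all its edges are forward, and consistently oriented if all its edges are forward or all are backward. A long run is a consistently oriented subpath of $C$ of length $20$ (i.e. $20$ edges). $d_C(u_i,u_j)$ is the length (number of edges) of the subpath from $u_i$ to $u_j$ in increasing index order, and for subpaths $P,P'$, $d_C(P,P')=d_C(v,v')$ where $v,v'$ are the initial vertices of $P,P'$. The hierarchy $\alpha\ll\beta$ means $\alpha$ is sufficiently small as a function of $\beta$. *)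

theory Defs
  imports Complex_Main
begin

text \<open>We index from 0 instead of 1.\<close>

definition cycle_labelling :: "'a set \<Rightarrow> ('a \<times> 'a) set \<Rightarrow> nat \<Rightarrow> (nat \<Rightarrow> 'a) \<Rightarrow> bool" where
  "cycle_labelling V E n u \<longleftrightarrow>
     bij_betw u {..<n} V \<and>
     (\<forall>i<n. ((u i, u (Suc i mod n)) \<in> E) \<noteq> ((u (Suc i mod n), u i) \<in> E)) \<and>
     E \<subseteq> {(u i, u (Suc i mod n)) | i. i < n} \<union> {(u (Suc i mod n), u i) | i. i < n}"

definition oriented_cycle :: "'a set \<Rightarrow> ('a \<times> 'a) set \<Rightarrow> nat \<Rightarrow> bool" where
  "oriented_cycle V E n \<longleftrightarrow> n \<ge> 3 \<and> (\<exists>u. cycle_labelling V E n u)"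

definition sinks :: "'a set \<Rightarrow> ('a \<times> 'a) set \<Rightarrow> nat" where
  "sinks V E = card {v \<in> V. \<not> (\<exists>w. (v, w) \<in> E)}"

definition fwd_edge :: "('a \<times> 'a) set \<Rightarrow> nat \<Rightarrow> (nat \<Rightarrow> 'a) \<Rightarrow> nat \<Rightarrow> bool" where
  "fwd_edge E n u i \<longleftrightarrow> (u (i mod n), u (Suc i mod n)) \<in> E"

definition bwd_edge :: "('a \<times> 'a) set \<Rightarrow> nat \<Rightarrow> (nat \<Rightarrow> 'a) \<Rightarrow> nat \<Rightarrow> bool" where
  "bwd_edge E n u i \<longleftrightarrow> (u (Suc i mod n), u (i mod n)) \<in> E"

definition forward_run :: "('a \<times> 'a) set \<Rightarrow> nat \<Rightarrow> (nat \<Rightarrow> 'a) \<Rightarrow> nat \<Rightarrow> bool" where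
  "forward_run E n u i \<longleftrightarrow> (\<forall>j<20. fwd_edge E n u (i + j))"

definition long_run :: "('a \<times> 'a) set \<Rightarrow> nat \<Rightarrow> (nat \<Rightarrow> 'a) \<Rightarrow> nat \<Rightarrow> bool" where
  "long_run E n u i \<longleftrightarrow> (\<forall>j<20. fwd_edge E n u (i + j)) \<or> (\<forall>j<20. bwd_edge E n u (i + j))"

definition dC :: "nat \<Rightarrow> nat \<Rightarrow> nat \<Rightarrow> nat" where
  "dC n i j = (j + n - i) mod n"

end

theory Submission
  imports Defs
begin

(* Call a position i of a labelling bad if the subpath of length 20 starting at
   u_i is not a long run.  A bad position lies at most 19 steps before a turn, i.e. a place
   where the orientation of consecutive edges changes.  Every turn from forward to backward
   ends in a sink, and forward-to-backward and backward-to-forward turns alternate, so there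
   are at most 2 sigma(C) turns and at most 38 sigma(C) bad positions.  When sigma(C) < n/160
   fewer than a quarter of all positions are bad, and both claims follow by pigeonhole:
   (ii) some i has none of the four positions i, i + n/4, i + 2n/4, i + 3n/4 bad;
   (i)  after possibly reversing the labelling at least half of the edges are forward, so
        more than a quarter of the positions start forward runs, and one of them is
        followed at distance k by a good position. *)

section \<open>Index arithmetic modulo n\<close>

lemma add_mod_inj:
  fixes n c :: nat
  assumes "i < n" "i' < n" "(i + c) mod n = (i' + c) mod n"
  shows "i = i'"
proof -
  have le: "i = i'" if "i \<le> i'" "i < n" "i' < n" "(i + c) mod n = (i' + c) mod n" for i i' :: nat
  proof -
    have "n dvd (i' + c) - (i + c)"
      using that mod_eq_dvd_iff_nat[of "i + c" "i' + c" n] by simp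
    then have "n dvd i' - i" by simp
    moreover have "i' - i < n" using that by simp
    ultimately show "i = i'" using that(1) by (metis dvd_imp_le le_antisym less_le_not_le zero_less_diff)
  qed
  show ?thesis using le[of i i'] le[of i' i] assms by linarith
qed

text \<open>Shifting by c maps the positions landing in S injectively into S.\<close>
lemma card_shift_preimage_le:
  fixes n c :: nat
  assumes "finite S"
  shows "card {i\<in>{..<n}. (i + c) mod n \<in> S} \<le> card S"
proof (rule card_inj_on_le[where f = "\<lambda>i. (i + c) mod n"])
  show "inj_on (\<lambda>i. (i + c) mod n) {i \<in> {..<n}. (i + c) mod n \<in> S}"
  proof (rule inj_onI)
    fix x y assume "x \<in> {i \<in> {..<n}. (i + c) mod n \<in> S}" "y \<in> {i \<in> {..<n}. (i + c) mod n \<in> S}"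
      "(x + c) mod n = (y + c) mod n"
    then show "x = y" using add_mod_inj[of x n y c] by simp
  qed
qed (use assms in auto)

lemma dC_add_mod:
  assumes "m < n"
  shows "dC n (x mod n) ((x + m) mod n) = m"
proof -
  define r where "r = x mod n"
  have r: "r < n" using assms r_def by simp
  have e: "(x + m) mod n = (r + m) mod n" by (simp add: r_def mod_add_left_eq)
  show ?thesis
  proof (cases "r + m < n")
    case True
    then show ?thesis using assms by (simp add: dC_def e r_def[symmetric])
  next
    case False
    then have "(r + m) mod n = r + m - n" using assms r by (simp add: mod_if)
    then show ?thesis using assms r False by (simp add: dC_def e r_def[symmetric])
  qed
qed

lemma sum_if_eq_card:
  "finite A \<Longrightarrow> (\<Sum>t\<in>A. if P t then 1 else 0) = int (card {t\<in>A. P t})"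
  by (simp add: sum.inter_filter[symmetric])

lemma card_filter_partition:
  assumes "finite A"
  shows "card {t\<in>A. P t} + card {t\<in>A. \<not> P t} = card A"
proof -
  have "card {t\<in>A. P t} + card {t\<in>A. \<not> P t} = card ({t\<in>A. P t} \<union> {t\<in>A. \<not> P t})"
    by (rule card_Un_disjoint[symmetric]) (use assms in auto)
  also have "{t\<in>A. P t} \<union> {t\<in>A. \<not> P t} = A" by auto
  finally show ?thesis .
qed

section \<open>Orientation of edges\<close>

lemma fwd_edge_mod: "n > 0 \<Longrightarrow> fwd_edge E n u (x mod n) = fwd_edge E n u x"
  by (simp add: fwd_edge_def mod_Suc_eq)

lemma fwd_edge_Suc_mod: "n > 0 \<Longrightarrow> fwd_edge E n u (Suc (x mod n)) = fwd_edge E n u (Suc x)"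
  by (metis fwd_edge_mod mod_Suc_eq)

lemma bwd_edge_iff_not_fwd:
  assumes "cycle_labelling V E n u" "n > 0"
  shows "bwd_edge E n u x \<longleftrightarrow> \<not> fwd_edge E n u x"
proof -
  have "x mod n < n" using assms(2) by simp
  then have "((u (x mod n), u (Suc (x mod n) mod n)) \<in> E) \<noteq> ((u (Suc (x mod n) mod n), u (x mod n)) \<in> E)"
    using assms(1) unfolding cycle_labelling_def by blast
  then show ?thesis unfolding fwd_edge_def bwd_edge_def by (simp add: mod_Suc_eq)
qed

lemma long_run_if_no_turn:
  assumes cl: "cycle_labelling V E n u" and n: "n > 0"
    and same: "\<forall>j<19. fwd_edge E n u (i + j) = fwd_edge E n u (Suc (i + j))"
  shows "long_run E n u i"
proof -
  have all: "fwd_edge E n u (i + j) = fwd_edge E n u i" if "j < 20" for j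
    using that
  proof (induction j)
    case (Suc j)
    then show ?case using same[rule_format, of j] by simp
  qed simp
  show ?thesis
  proof (cases "fwd_edge E n u i")
    case True
    then show ?thesis using all unfolding long_run_def by simp
  next
    case False
    then show ?thesis using all bwd_edge_iff_not_fwd[OF cl n] unfolding long_run_def by simp
  qed
qed

lemma forward_run_if_long_run:
  assumes cl: "cycle_labelling V E n u" and n: "n > 0"
    and "long_run E n u i" "fwd_edge E n u i"
  shows "forward_run E n u i"
proof -
  have "\<not> bwd_edge E n u i" using assms(4) bwd_edge_iff_not_fwd[OF cl n] by simp
  then have "\<not> (\<forall>j<20. bwd_edge E n u (i + j))" by (metis add_0_right zero_less_numeral)
  then show ?thesis using assms(3) unfolding long_run_def forward_run_def by blast
qed

section \<open>Turns and bad positions\<close>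

definition turns_fb :: "('a \<times> 'a) set \<Rightarrow> nat \<Rightarrow> (nat \<Rightarrow> 'a) \<Rightarrow> nat set" where
  "turns_fb E n u = {t\<in>{..<n}. fwd_edge E n u t \<and> \<not> fwd_edge E n u (Suc t)}"

definition turns_bf :: "('a \<times> 'a) set \<Rightarrow> nat \<Rightarrow> (nat \<Rightarrow> 'a) \<Rightarrow> nat set" where
  "turns_bf E n u = {t\<in>{..<n}. \<not> fwd_edge E n u t \<and> fwd_edge E n u (Suc t)}"

definition bad_positions :: "('a \<times> 'a) set \<Rightarrow> nat \<Rightarrow> (nat \<Rightarrow> 'a) \<Rightarrow> nat set" where
  "bad_positions E n u = {i\<in>{..<n}. \<not> long_run E n u i}"

lemma sink_after_turn_fb:
  assumes cl: "cycle_labelling V E n u" and n: "n > 0" and t: "t \<in> turns_fb E n u"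
  shows "\<not> (\<exists>w. (u (Suc t mod n), w) \<in> E)"
proof
  have inj: "inj_on u {..<n}" using cl unfolding cycle_labelling_def bij_betw_def by blast
  have Esub: "E \<subseteq> {(u i, u (Suc i mod n)) | i. i < n} \<union> {(u (Suc i mod n), u i) | i. i < n}"
    using cl unfolding cycle_labelling_def by blast
  have tn: "t < n" and ft: "fwd_edge E n u t" and nf: "\<not> fwd_edge E n u (Suc t)"
    using t by (auto simp: turns_fb_def)
  assume "\<exists>w. (u (Suc t mod n), w) \<in> E"
  then obtain w where vw: "(u (Suc t mod n), w) \<in> E" ..
  then obtain i where i: "i < n"
    "(u (Suc t mod n), w) = (u i, u (Suc i mod n)) \<or> (u (Suc t mod n), w) = (u (Suc i mod n), u i)"
    using Esub by blast
  then show False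
  proof (elim disjE)
    assume h: "(u (Suc t mod n), w) = (u i, u (Suc i mod n))"
    then have "Suc t mod n = i" using inj i(1) n by (auto dest: inj_onD)
    then have "Suc i mod n = Suc (Suc t) mod n" by (metis mod_Suc_eq)
    then show False using h vw nf by (simp add: fwd_edge_def)
  next
    assume h: "(u (Suc t mod n), w) = (u (Suc i mod n), u i)"
    then have "Suc t mod n = Suc i mod n" using inj i(1) n by (auto dest: inj_onD)
    then have "t = i" using add_mod_inj[of t n i 1] tn i(1) by simp
    then have "bwd_edge E n u t" using h vw tn by (simp add: bwd_edge_def)
    then show False using ft bwd_edge_iff_not_fwd[OF cl n] by simp
  qed
qed

lemma card_turns_fb_le_sinks:
  assumes cl: "cycle_labelling V E n u" and n: "n > 0"
  shows "card (turns_fb E n u) \<le> sinks V E"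
  unfolding sinks_def
proof (rule card_inj_on_le[where f = "\<lambda>t. u (Suc t mod n)"])
  have "bij_betw u {..<n} V" using cl unfolding cycle_labelling_def by blast
  then have inj: "inj_on u {..<n}" and V: "V = u ` {..<n}" by (auto simp: bij_betw_def)
  show "finite {v \<in> V. \<not> (\<exists>w. (v, w) \<in> E)}" using V by simp
  show "inj_on (\<lambda>t. u (Suc t mod n)) (turns_fb E n u)"
  proof (rule inj_onI)
    fix t t' assume t: "t \<in> turns_fb E n u" "t' \<in> turns_fb E n u" "u (Suc t mod n) = u (Suc t' mod n)"
    then have "Suc t mod n = Suc t' mod n" using inj n by (auto dest: inj_onD)
    then show "t = t'" using t add_mod_inj[of t n t' 1] by (auto simp: turns_fb_def)
  qed
  show "(\<lambda>t. u (Suc t mod n)) ` turns_fb E n u \<subseteq> {v \<in> V. \<not> (\<exists>w. (v, w) \<in> E)}"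
    using sink_after_turn_fb[OF cl n] V n by auto
qed

text \<open>Turns of the two kinds alternate around the cycle, so they are equally many
  (a telescoping sum of the orientation indicator).\<close>
lemma card_turns_bf_eq_fb:
  assumes n: "n > 0"
  shows "card (turns_bf E n u) = card (turns_fb E n u)"
proof -
  define F where "F t = (if fwd_edge E n u t then 1 else 0 :: int)" for t
  have "(\<Sum>t<n. F (Suc t) - F t) = F n - F 0" by (rule sum_lessThan_telescope)
  also have "F n = F 0" using fwd_edge_mod[OF n, of E u n] fwd_edge_mod[OF n, of E u 0] by (simp add: F_def)
  finally have zero: "(\<Sum>t<n. F (Suc t) - F t) = 0" by simp
  have "(\<Sum>t<n. F (Suc t) - F t)
      = (\<Sum>t<n. (if \<not> fwd_edge E n u t \<and> fwd_edge E n u (Suc t) then 1 else 0)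
                 - (if fwd_edge E n u t \<and> \<not> fwd_edge E n u (Suc t) then 1 else 0))"
    by (rule sum.cong) (auto simp: F_def)
  also have "\<dots> = int (card (turns_bf E n u)) - int (card (turns_fb E n u))"
    by (simp add: sum_subtractf sum_if_eq_card turns_bf_def turns_fb_def)
  finally show ?thesis using zero by simp
qed

text \<open>Each bad position is within 19 steps before one of at most 2 sigma(C) turns.\<close>
lemma card_bad_positions_le:
  assumes cl: "cycle_labelling V E n u" and n: "n > 0"
  shows "card (bad_positions E n u) \<le> 38 * sinks V E"
proof -
  define T where "T = turns_fb E n u \<union> turns_bf E n u"
  have fT: "finite T" by (simp add: T_def turns_fb_def turns_bf_def)
  have "bad_positions E n u \<subseteq> (\<Union>j\<in>{..<19}. {i\<in>{..<n}. (i + j) mod n \<in> T})"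
  proof
    fix i assume "i \<in> bad_positions E n u"
    then have i: "i < n" "\<not> long_run E n u i" by (auto simp: bad_positions_def)
    then obtain j where j: "j < 19" "fwd_edge E n u (i + j) \<noteq> fwd_edge E n u (Suc (i + j))"
      using long_run_if_no_turn[OF cl n] by blast
    then have "(i + j) mod n \<in> T"
      using fwd_edge_mod[OF n, of E u "i + j"] fwd_edge_Suc_mod[OF n, of E u "i + j"] n
      by (auto simp: T_def turns_fb_def turns_bf_def)
    then show "i \<in> (\<Union>j\<in>{..<19}. {i\<in>{..<n}. (i + j) mod n \<in> T})" using i j by auto
  qed
  then have "card (bad_positions E n u) \<le> card (\<Union>j\<in>{..<19}. {i\<in>{..<n}. (i + j) mod n \<in> T})"
    by (intro card_mono) auto
  also have "\<dots> \<le> (\<Sum>j<19. card {i\<in>{..<n}. (i + j) mod n \<in> T})" by (rule card_UN_le) simp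
  also have "\<dots> \<le> (\<Sum>j<(19::nat). card T)" by (intro sum_mono card_shift_preimage_le fT)
  also have "\<dots> = 19 * card T" by simp
  also have "card T \<le> card (turns_fb E n u) + card (turns_bf E n u)" unfolding T_def by (rule card_Un_le)
  also have "\<dots> \<le> 2 * sinks V E"
    using card_turns_bf_eq_fb[OF n, of E u] card_turns_fb_le_sinks[OF cl n] by simp
  finally show ?thesis by simp
qed

section \<open>Reversing a labelling\<close>

definition reverse_labelling :: "nat \<Rightarrow> (nat \<Rightarrow> 'a) \<Rightarrow> nat \<Rightarrow> 'a" where
  "reverse_labelling n u = (\<lambda>i. u ((n - i) mod n))"

lemma reverse_labelling_edge:
  assumes t: "t < n"
  shows "reverse_labelling n u t = u (Suc (n - 1 - t) mod n)"
    and "reverse_labelling n u (Suc t mod n) = u (n - 1 - t)"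
proof -
  show "reverse_labelling n u t = u (Suc (n - 1 - t) mod n)"
    using t by (simp add: reverse_labelling_def Suc_diff_Suc)
  show "reverse_labelling n u (Suc t mod n) = u (n - 1 - t)"
  proof (cases "Suc t < n")
    case False
    then have "Suc t = n" using t by simp
    then show ?thesis by (simp add: reverse_labelling_def)
  qed (simp add: reverse_labelling_def)
qed

lemma cycle_labelling_reverse:
  assumes cl: "cycle_labelling V E n u" and n: "n > 0"
  shows "cycle_labelling V E n (reverse_labelling n u)"
proof -
  let ?u' = "reverse_labelling n u"
  have bij: "bij_betw u {..<n} V"
    and xo: "\<forall>i<n. ((u i, u (Suc i mod n)) \<in> E) \<noteq> ((u (Suc i mod n), u i) \<in> E)"
    and Es: "E \<subseteq> {(u i, u (Suc i mod n)) | i. i < n} \<union> {(u (Suc i mod n), u i) | i. i < n}"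
    using cl unfolding cycle_labelling_def by blast+
  have involution: "\<forall>a\<in>{..<n}. (n - (n - a) mod n) mod n = a"
  proof
    fix a assume "a \<in> {..<n}"
    then show "(n - (n - a) mod n) mod n = a" by (cases "a = 0") simp_all
  qed
  have "bij_betw (\<lambda>i. (n - i) mod n) {..<n} {..<n}"
    by (rule bij_betw_byWitness[where f = "\<lambda>i. (n - i) mod n" and f' = "\<lambda>i. (n - i) mod n",
          OF involution involution]) (use n in auto)
  then have bij': "bij_betw ?u' {..<n} V"
    using bij_betw_trans[OF _ bij] by (simp add: reverse_labelling_def comp_def)
  have one_arc: "((?u' i, ?u' (Suc i mod n)) \<in> E) \<noteq> ((?u' (Suc i mod n), ?u' i) \<in> E)" if i: "i < n" for i
  proof -
    have "n - 1 - i < n" using i by simp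
    then show ?thesis using xo reverse_labelling_edge[OF i] by metis
  qed
  have "E \<subseteq> {(?u' i, ?u' (Suc i mod n)) | i. i < n} \<union> {(?u' (Suc i mod n), ?u' i) | i. i < n}"
  proof
    fix e assume "e \<in> E"
    then obtain i where i: "i < n" "e = (u i, u (Suc i mod n)) \<or> e = (u (Suc i mod n), u i)"
      using Es by blast
    define t where "t = n - 1 - i"
    have t: "t < n" "n - 1 - t = i" using i n by (auto simp: t_def)
    have "?u' t = u (Suc i mod n)" "?u' (Suc t mod n) = u i"
      using reverse_labelling_edge[OF t(1)] t(2) by simp_all
    then have "e = (?u' (Suc t mod n), ?u' t) \<or> e = (?u' t, ?u' (Suc t mod n))" using i(2) by auto
    then show "e \<in> {(?u' i, ?u' (Suc i mod n)) | i. i < n} \<union> {(?u' (Suc i mod n), ?u' i) | i. i < n}"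
      using t(1) by blast
  qed
  then show ?thesis using bij' one_arc unfolding cycle_labelling_def by blast
qed

text \<open>Reversal turns forward edges into backward ones, so it swaps the two edge counts.\<close>
lemma card_fwd_edges_reverse:
  assumes cl: "cycle_labelling V E n u" and n: "n > 0"
  shows "card {t\<in>{..<n}. fwd_edge E n (reverse_labelling n u) t} = card {t\<in>{..<n}. \<not> fwd_edge E n u t}"
proof -
  have fwd': "fwd_edge E n (reverse_labelling n u) t \<longleftrightarrow> \<not> fwd_edge E n u (n - 1 - t)" if t: "t < n" for t
  proof -
    have "fwd_edge E n (reverse_labelling n u) t \<longleftrightarrow> bwd_edge E n u (n - 1 - t)"
      unfolding fwd_edge_def bwd_edge_def using t by (simp add: reverse_labelling_edge[OF t])
    then show ?thesis using bwd_edge_iff_not_fwd[OF cl n] by simp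
  qed
  have "bij_betw (\<lambda>s. n - 1 - s) {t\<in>{..<n}. \<not> fwd_edge E n u t}
      {t\<in>{..<n}. fwd_edge E n (reverse_labelling n u) t}"
    by (rule bij_betw_byWitness[where f' = "\<lambda>s. n - 1 - s"]) (use fwd' n in auto)
  then show ?thesis by (simp add: bij_betw_same_card)
qed

lemma labelling_with_forward_majority:
  assumes cl: "cycle_labelling V E n u" and n: "n > 0"
  obtains w where "cycle_labelling V E n w" "n \<le> 2 * card {t\<in>{..<n}. fwd_edge E n w t}"
proof (cases "n \<le> 2 * card {t\<in>{..<n}. fwd_edge E n u t}")
  case True
  then show ?thesis using cl that by blast
next
  case False
  have "card {t\<in>{..<n}. fwd_edge E n u t} + card {t\<in>{..<n}. \<not> fwd_edge E n u t} = n"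
    using card_filter_partition[of "{..<n}"] by simp
  then have "n \<le> 2 * card {t\<in>{..<n}. fwd_edge E n (reverse_labelling n u) t}"
    using False card_fwd_edges_reverse[OF cl n] by simp
  then show ?thesis using cycle_labelling_reverse[OF cl n] that by blast
qed

section \<open>Pigeonhole arguments\<close>

text \<open>If fewer than a quarter of the positions are bad and at least half of the edges are
  forward, a forward run is followed at any prescribed distance k < n by a long run: every
  good position with a forward first edge starts a forward run, so forward runs outnumber
  the bad positions, and at most card B of them are followed at distance k by a bad one.\<close>
lemma forward_run_and_long_run_at_distance:
  assumes cl: "cycle_labelling V E n u" and n: "n > 0"
    and few_bad: "4 * card (bad_positions E n u) < n"
    and half: "n \<le> 2 * card {t\<in>{..<n}. fwd_edge E n u t}"
    and k: "k < n"
  shows "\<exists>i j. i < n \<and> j < n \<and> forward_run E n u i \<and> long_run E n u j \<and> dC n i j = k"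
proof -
  define B where "B = bad_positions E n u"
  define Fw where "Fw = {i\<in>{..<n}. forward_run E n u i}"
  define Bw where "Bw = {t\<in>{..<n}. \<not> fwd_edge E n u t}"
  have "card {t\<in>{..<n}. fwd_edge E n u t} + card Bw = n"
    using card_filter_partition[of "{..<n}"] by (simp add: Bw_def)
  then have c_Bw: "2 * card Bw \<le> n" using half by simp
  have "{..<n} - Fw \<subseteq> B \<union> Bw"
    using forward_run_if_long_run[OF cl n] by (auto simp: Fw_def B_def Bw_def bad_positions_def)
  then have "card ({..<n} - Fw) \<le> card (B \<union> Bw)"
    by (rule card_mono[rotated]) (simp add: B_def Bw_def bad_positions_def)
  also have "\<dots> \<le> card B + card Bw" by (rule card_Un_le)
  finally have "card ({..<n} - Fw) \<le> card B + card Bw" .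
  moreover have "card ({..<n} - Fw) = n - card Fw" by (subst card_Diff_subset) (auto simp: Fw_def)
  ultimately have c_Fw: "card B < card Fw" using c_Bw few_bad by (simp add: B_def)
  define S where "S = {i\<in>{..<n}. (i + k) mod n \<in> B}"
  have "card S \<le> card B" unfolding S_def by (rule card_shift_preimage_le) (simp add: B_def bad_positions_def)
  then have "\<not> Fw \<subseteq> S" using c_Fw card_mono[of S Fw] by (auto simp: S_def)
  then obtain i where i: "i \<in> Fw" "i \<notin> S" by blast
  show ?thesis
  proof (intro exI conjI)
    show "i < n" "forward_run E n u i" using i by (auto simp: Fw_def)
    show "(i + k) mod n < n" using n by simp
    show "long_run E n u ((i + k) mod n)" using i n by (auto simp: S_def Fw_def B_def bad_positions_def)
    show "dC n i ((i + k) mod n) = k" using dC_add_mod[OF k, of i] i by (simp add: Fw_def)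
  qed
qed

lemma four_long_runs_equally_spaced:
  assumes n: "n > 0" and few_bad: "4 * card (bad_positions E n u) < n" and m: "m < n"
  shows "\<exists>p::nat \<Rightarrow> nat. (\<forall>t\<in>{1,2,3,4}. p t < n \<and> long_run E n u (p t)) \<and>
           (\<forall>t\<in>{1,2,3}. dC n (p t) (p (t + 1)) = m)"
proof -
  define B where "B = bad_positions E n u"
  define S where "S = (\<Union>a\<in>{..<4}. {i\<in>{..<n}. (i + a * m) mod n \<in> B})"
  have "card S \<le> (\<Sum>a<4. card {i\<in>{..<n}. (i + a * m) mod n \<in> B})" unfolding S_def by (rule card_UN_le) simp
  also have "\<dots> \<le> (\<Sum>a<(4::nat). card B)"
    by (intro sum_mono card_shift_preimage_le) (simp add: B_def bad_positions_def)
  finally have "card S < n" using few_bad by (simp add: B_def)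
  then have "\<not> {..<n} \<subseteq> S" using card_mono[of S "{..<n}"] by (auto simp: S_def)
  then obtain i where i: "i < n" "i \<notin> S" by blast
  define p where "p t = (i + (t - 1) * m) mod n" for t
  show ?thesis
  proof (intro exI conjI ballI)
    fix t :: nat assume t: "t \<in> {1,2,3,4}"
    show "p t < n" using n by (simp add: p_def)
    have "t - 1 < 4" using t by auto
    then have "p t \<notin> B" using i by (auto simp: S_def p_def)
    then show "long_run E n u (p t)" using n by (auto simp: B_def bad_positions_def p_def)
  next
    fix t :: nat assume "t \<in> {1,2,3}"
    then have "(t + 1 - 1) * m = (t - 1) * m + m" by auto
    then have "p (t + 1) = (i + (t - 1) * m + m) mod n" by (simp add: p_def add.assoc)
    then show "dC n (p t) (p (t + 1)) = m" using dC_add_mod[OF m, of "i + (t - 1) * m"] by (simp add: p_def)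
  qed
qed

text \<open>The statement for a single cycle with few sinks: fewer than n/160 sinks leave fewer than
  n/4 bad positions in a labelling with a majority of forward edges.\<close>
lemma labelling_with_long_runs:
  assumes C: "oriented_cycle V E n" and few_sinks: "160 * sinks V E < n" and k: "k < n"
  shows "\<exists>u. cycle_labelling V E n u \<and>
           (\<exists>i j. i < n \<and> j < n \<and> forward_run E n u i \<and> long_run E n u j \<and> dC n i j = k) \<and>
           (\<exists>p::nat \<Rightarrow> nat. (\<forall>t\<in>{1,2,3,4}. p t < n \<and> long_run E n u (p t)) \<and>
              (\<forall>t\<in>{1,2,3}. dC n (p t) (p (t+1)) = n div 4))"
proof -
  obtain u where cl: "cycle_labelling V E n u" and n: "n > 0"
    using C by (auto simp: oriented_cycle_def)
  obtain w where clw: "cycle_labelling V E n w" and half: "n \<le> 2 * card {t\<in>{..<n}. fwd_edge E n w t}"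
    using labelling_with_forward_majority[OF cl n] .
  have few_bad: "4 * card (bad_positions E n w) < n"
    using card_bad_positions_le[OF clw n] few_sinks by linarith
  have "n div 4 < n" using n by simp
  note runs_at_distance_k = forward_run_and_long_run_at_distance[OF clw n few_bad half k]
  note four_runs = four_long_runs_equally_spaced[OF n few_bad \<open>n div 4 < n\<close>]
  show ?thesis using clw runs_at_distance_k four_runs by blast
qed

text \<open>Proposition 5.5, with epsilon0 = 1/160 and no restriction on n beyond n \<ge> 3.\<close>
theorem proposition5p5:
  "\<exists>\<epsilon>0::real. \<epsilon>0 > 0 \<and> (\<forall>\<epsilon>::real. 0 < \<epsilon> \<and> \<epsilon> \<le> \<epsilon>0 \<longrightarrow>
     (\<exists>n0::nat. \<forall>n \<ge> n0. \<forall>(k::nat) (V::nat set) (E::(nat \<times> nat) set).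
        4 * k \<ge> n \<and> 4 * k \<le> 3 * n \<and> oriented_cycle V E n \<and> real (sinks V E) < \<epsilon> * real n
        \<longrightarrow> (\<exists>u. cycle_labelling V E n u \<and>
              (\<exists>i j. i < n \<and> j < n \<and> forward_run E n u i \<and> long_run E n u j \<and> dC n i j = k) \<and>
              (\<exists>p::nat \<Rightarrow> nat. (\<forall>t\<in>{1,2,3,4}. p t < n \<and> long_run E n u (p t)) \<and>
                  (\<forall>t\<in>{1,2,3}. dC n (p t) (p (t+1)) = n div 4)))))"
proof (intro exI[of _ "1/160"] conjI allI impI)
  fix \<epsilon> :: real assume eps: "0 < \<epsilon> \<and> \<epsilon> \<le> 1/160"
  have "160 * sinks V E < n \<and> k < n"
    if "n \<le> 4 * k \<and> 4 * k \<le> 3 * n \<and> oriented_cycle V E n \<and> real (sinks V E) < \<epsilon> * real n"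
    for n k :: nat and V :: "nat set" and E :: "(nat \<times> nat) set"
  proof -
    have "real (sinks V E) < real n / 160"
      using that eps mult_right_mono[of \<epsilon> "1/160" "real n"] by simp
    moreover have "n > 0" using that by (simp add: oriented_cycle_def)
    ultimately show ?thesis using that by linarith
  qed
  then show "\<exists>n0::nat. \<forall>n \<ge> n0. \<forall>(k::nat) (V::nat set) (E::(nat \<times> nat) set).
        4 * k \<ge> n \<and> 4 * k \<le> 3 * n \<and> oriented_cycle V E n \<and> real (sinks V E) < \<epsilon> * real n
        \<longrightarrow> (\<exists>u. cycle_labelling V E n u \<and>
              (\<exists>i j. i < n \<and> j < n \<and> forward_run E n u i \<and> long_run E n u j \<and> dC n i j = k) \<and>
              (\<exists>p::nat \<Rightarrow> nat. (\<forall>t\<in>{1,2,3,4}. p t < n \<and> long_run E n u (p t)) \<and>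
                  (\<forall>t\<in>{1,2,3}. dC n (p t) (p (t+1)) = n div 4)))"
    using labelling_with_long_runs by blast
qed simp

end
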